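(* Let $S$ be an integral monoid with zero $0$, and let $0,1\in E\subseteq E(S)$. Then $S$ is inductive when regarded as an $E$-demigroup via $d(s)=1$ for all $s$ (i.e. as a left $E$-monoid) if and only if it is inductive when regarded as an $E$-demigroup via $d(0)=0$ and $d(s)=1$ for $s\neq0$ (i.e. as a left $E$-monoid with zero). In that case $C^0_E(S)$ is closed under the multiplication of $Rest(E,S)$, and the multiplication of $Rest_0(E,S)$ coincides with the restriction to $C^0_E(S)$ of the multiplication of $Rest(E,S)$.
   Context: For a semigroup $S$, $E(S)$ is its set of idempotents; for $e,f\in E(S)$, $e\le_r f$ iff $e=ef$. $E\subseteq E(S)$ is right pre-reduced if $e=ef$ and $f=fe$ imply $e=f$ for $e,f\in E$. A monoid with zero is integral if $st=0$ implies $s=0$ or $t=0$. A demigroup is a semigroup $S$ with unary $d$ such that $d(x)\in E(S)$, $d(x)x=x$, $d(xy)=d(xd(y))$. For $E\subseteq E(S)$, $S$ is an $E$-demigroup if $d(s)\in E$ for all $s$ and $ed(e)=e$ for all $e\in E$. It is inductive if $E$ is right pre-reduced, $(E,\le_r)$ is a meet-semilattice with meet $\wedge$, and there is a function $\cdot:S\times E\to E$ (necessarily unique) with (I1) for all $t\in S$, $e\in E$, $s\in S$: ($ste=st$ and $sd(t)=s$) iff $s(t\cdot e)=s$; (I2) for $s\in S$, $e,f\in E$: $se=sf=s$ implies $s(e\wedge f)=s$. For an inductive $E$-demigroup, $Rest_d(E,S)$ is the set $C^d_E(S)=\{(e,s)\in E\times S\mid es=s,\ d(e)=d(s)\}$ with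 multiplication $(e,s)(f,t)=(e\wedge(s\cdot f),(e\wedge(s\cdot f))st)$ and $D((e,s))=(e,e)$. $Rest(E,S)$ denotes $Rest_d(E,S)$ for $d\equiv1$ (underlying set $C_E(S)=\{(e,s)\in E\times S\mid es=s\}$); $Rest_0(E,S)$ denotes $Rest_d(E,S)$ for $d(0)=0$, $d(s)=1$ ($s\ne0$) (underlying set $C^0_E(S)=\{(e,s)\in C_E(S)\mid s=0\Rightarrow e=0\}$). *)

theory Defs
  imports Main
begin

definition idem :: "'a::monoid_mult \<Rightarrow> bool" where
  "idem e \<longleftrightarrow> e * e = e"

definition le_r :: "'a::monoid_mult \<Rightarrow> 'a \<Rightarrow> bool" where
  "le_r e f \<longleftrightarrow> e = e * f"

definition right_pre_reduced :: "'a::monoid_mult set \<Rightarrow> bool" where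
  "right_pre_reduced E \<longleftrightarrow> (\<forall>e\<in>E. \<forall>f\<in>E. e = e * f \<and> f = f * e \<longrightarrow> e = f)"

definition demigroup :: "('a::monoid_mult \<Rightarrow> 'a) \<Rightarrow> bool" where
  "demigroup d \<longleftrightarrow> (\<forall>x. idem (d x) \<and> d x * x = x) \<and> (\<forall>x y. d (x * y) = d (x * d y))"

definition E_demigroup :: "('a::monoid_mult \<Rightarrow> 'a) \<Rightarrow> 'a set \<Rightarrow> bool" where
  "E_demigroup d E \<longleftrightarrow> demigroup d \<and> (\<forall>e\<in>E. idem e) \<and> (\<forall>s. d s \<in> E) \<and> (\<forall>e\<in>E. e * d e = e)"

definition is_meet :: "'a::monoid_mult set \<Rightarrow> 'a \<Rightarrow> 'a \<Rightarrow> 'a \<Rightarrow> bool" where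
  "is_meet E e f m \<longleftrightarrow> m \<in> E \<and> le_r m e \<and> le_r m f \<and> (\<forall>g\<in>E. le_r g e \<and> le_r g f \<longrightarrow> le_r g m)"

definition meet :: "'a::monoid_mult set \<Rightarrow> 'a \<Rightarrow> 'a \<Rightarrow> 'a" where
  "meet E e f = (THE m. is_meet E e f m)"

definition meet_semilattice :: "'a::monoid_mult set \<Rightarrow> bool" where
  "meet_semilattice E \<longleftrightarrow> (\<forall>e\<in>E. \<forall>f\<in>E. \<exists>m. is_meet E e f m)"

text \<open>Conditions (I1) and (I2) for a candidate function dot : S x E -> E.\<close>
definition dot_ok :: "('a::monoid_mult \<Rightarrow> 'a) \<Rightarrow> 'a set \<Rightarrow> ('a \<Rightarrow> 'a \<Rightarrow> 'a) \<Rightarrow> bool" where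
  "dot_ok d E dot \<longleftrightarrow>
     (\<forall>t e. e \<in> E \<longrightarrow> dot t e \<in> E) \<and>
     (\<forall>t. \<forall>e\<in>E. \<forall>s. (s * t * e = s * t \<and> s * d t = s) \<longleftrightarrow> s * dot t e = s) \<and>
     (\<forall>s. \<forall>e\<in>E. \<forall>f\<in>E. s * e = s \<and> s * f = s \<longrightarrow> s * meet E e f = s)"

definition inductive_Edemigroup :: "('a::monoid_mult \<Rightarrow> 'a) \<Rightarrow> 'a set \<Rightarrow> bool" where
  "inductive_Edemigroup d E \<longleftrightarrow> E_demigroup d E \<and> right_pre_reduced E \<and> meet_semilattice E
     \<and> (\<exists>dot. dot_ok d E dot)"

definition ind_dot :: "('a::monoid_mult \<Rightarrow> 'a) \<Rightarrow> 'a set \<Rightarrow> 'a \<Rightarrow> 'a \<Rightarrow> 'a" where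
  "ind_dot d E = (SOME dot. dot_ok d E dot)"

text \<open>Underlying set C^d_E(S) of Rest_d(E,S) and its multiplication.\<close>
definition C_d :: "('a::monoid_mult \<Rightarrow> 'a) \<Rightarrow> 'a set \<Rightarrow> ('a \<times> 'a) set" where
  "C_d d E = {(e, s). e \<in> E \<and> e * s = s \<and> d e = d s}"

definition rest_mult :: "('a::monoid_mult \<Rightarrow> 'a) \<Rightarrow> 'a set \<Rightarrow> 'a \<times> 'a \<Rightarrow> 'a \<times> 'a \<Rightarrow> 'a \<times> 'a" where
  "rest_mult d E x y = (case x of (e, s) \<Rightarrow> case y of (f, t) \<Rightarrow>
      (let g = meet E e (ind_dot d E s f) in (g, g * s * t)))"

definition d_one :: "'a::monoid_mult \<Rightarrow> 'a" where
  "d_one s = 1"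

definition d_zero :: "'a::{monoid_mult, zero} \<Rightarrow> 'a" where
  "d_zero s = (if s = 0 then 0 else 1)"

end

theory Submission
  imports Defs
begin

text \<open>Both choices of d give E-demigroups, and a structure function for one
  choice is turned into one for the other by changing only its values at t = 0 (where
  (I1) forces the value 1 for d = 1 and may take 0 for the d with d 0 = 0). Since E is
  right pre-reduced, (I1) determines t \<cdot> e whenever d t = 1, so the two multiplications
  of pairs agree on pairs (e, s) with s \<noteq> 0; pairs with s = 0 are (0, 0), and both
  multiplications send them to (0, 0) because 0 is the least element of E. Closure of
  C^0_E(S) uses integrality: if g = e \<and> (s \<cdot> f) is nonzero then g s \<noteq> 0,
  and g s f = g s forces f, hence t, to be nonzero.\<close>

lemma E_demigroup_d_one:
  assumes "\<forall>e\<in>E. e * e = e" and "1 \<in> E"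
  shows "E_demigroup d_one E"
  using assms by (auto simp: E_demigroup_def demigroup_def d_one_def idem_def)

lemma E_demigroup_d_zero:
  fixes E :: "'a::{monoid_mult, mult_zero} set"
  assumes "\<forall>s t::'a. s * t = 0 \<longrightarrow> s = 0 \<or> t = 0"
    and "\<forall>e\<in>E. e * e = e" and "0 \<in> E" and "1 \<in> E"
  shows "E_demigroup d_zero E"
  using assms by (auto simp: E_demigroup_def demigroup_def d_zero_def idem_def)

lemma dot_ok_d_zero_if_dot_ok_d_one:
  fixes E :: "'a::{monoid_mult, mult_zero} set"
  assumes "dot_ok d_one E dot" and "0 \<in> E"
  shows "dot_ok d_zero E (\<lambda>t e. if t = 0 then 0 else dot t e)"
  using assms unfolding dot_ok_def d_one_def d_zero_def by (auto simp: mult.assoc)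

lemma dot_ok_d_one_if_dot_ok_d_zero:
  fixes E :: "'a::{monoid_mult, mult_zero} set"
  assumes "dot_ok d_zero E dot" and "1 \<in> E"
  shows "dot_ok d_one E (\<lambda>t e. if t = 0 then 1 else dot t e)"
proof -
  have "(s * t * e = s * t \<and> s * d_one t = s) \<longleftrightarrow> s * (if t = 0 then 1 else dot t e) = s"
    if "e \<in> E" for t e s
  proof (cases "t = 0")
    case False
    then have "d_one t = d_zero t" by (simp add: d_one_def d_zero_def)
    with False that assms(1) show ?thesis unfolding dot_ok_def by simp
  qed (simp add: d_one_def)
  with assms show ?thesis unfolding dot_ok_def by auto
qed

lemma inductive_Edemigroup_d_one_iff_d_zero:
  fixes E :: "'a::{monoid_mult, mult_zero} set"
  assumes "\<forall>s t::'a. s * t = 0 \<longrightarrow> s = 0 \<or> t = 0"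
    and "\<forall>e\<in>E. e * e = e" and "0 \<in> E" and "1 \<in> E"
  shows "inductive_Edemigroup d_one E \<longleftrightarrow> inductive_Edemigroup d_zero E"
  unfolding inductive_Edemigroup_def
  using E_demigroup_d_one[OF assms(2,4)] E_demigroup_d_zero[OF assms]
    dot_ok_d_zero_if_dot_ok_d_one[OF _ assms(3)] dot_ok_d_one_if_dot_ok_d_zero[OF _ assms(4)]
  by blast

lemma ind_dot_ok:
  assumes "inductive_Edemigroup d E"
  shows "dot_ok d E (ind_dot d E)"
  using assms unfolding inductive_Edemigroup_def ind_dot_def by (metis someI_ex)

text \<open>Both values are idempotents fixed on the right by each other, via (I1) with s
  taken to be the value itself.\<close>
lemma dot_ok_unique:
  assumes "right_pre_reduced E" and "\<forall>e\<in>E. e * e = e"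
    and "dot_ok d E dot" and "dot_ok d' E dot'" and "d t = d' t" and "e \<in> E"
  shows "dot t e = dot' t e"
proof -
  let ?u = "dot t e" and ?v = "dot' t e"
  have "?u \<in> E" and "?v \<in> E" using assms(3,4,6) unfolding dot_ok_def by auto
  moreover have "s * ?u = s \<longleftrightarrow> s * ?v = s" for s
    using assms(3-6) unfolding dot_ok_def by (metis (no_types))
  ultimately have "?u * ?v = ?u" and "?v * ?u = ?v" using assms(2) by auto
  with \<open>?u \<in> E\<close> \<open>?v \<in> E\<close> assms(1) show ?thesis unfolding right_pre_reduced_def by metis
qed

lemma meet_eqI:
  assumes "right_pre_reduced E" and "is_meet E e f m"
  shows "meet E e f = m"
  unfolding meet_def
proof (rule the_equality)
  fix m' assume "is_meet E e f m'"
  with assms show "m' = m"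
    unfolding is_meet_def le_r_def right_pre_reduced_def by metis
qed (fact assms(2))

lemma is_meet_meet:
  assumes "right_pre_reduced E" and "meet_semilattice E" and "e \<in> E" and "f \<in> E"
  shows "is_meet E e f (meet E e f)"
  using assms meet_eqI unfolding meet_semilattice_def by metis

lemma meet_zero_left:
  fixes E :: "'a::{monoid_mult, mult_zero} set"
  assumes "right_pre_reduced E" and "0 \<in> E" and "u \<in> E"
  shows "meet E 0 u = 0"
  using assms by (intro meet_eqI) (auto simp: is_meet_def le_r_def)

text \<open>If 0 = 1 the monoid is trivial, so this needs no hypothesis.\<close>
lemma mem_C_d_d_zero_iff:
  fixes E :: "'a::{monoid_mult, mult_zero} set"
  shows "(e, s) \<in> C_d d_zero E \<longleftrightarrow> e \<in> E \<and> e * s = s \<and> (e = 0 \<longleftrightarrow> s = 0)"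
proof (cases "(0::'a) = 1")
  case True
  then have "x = 0" for x :: 'a by (metis mult_1_left mult_zero_left)
  then have "e = 0" and "s = 0" by blast+
  then show ?thesis by (simp add: C_d_def)
qed (auto simp: C_d_def d_zero_def)

lemma rest_mult_zero_left:
  fixes E :: "'a::{monoid_mult, mult_zero} set"
  assumes "inductive_Edemigroup d E" and "0 \<in> E" and "f \<in> E"
  shows "rest_mult d E (0, 0) (f, t) = (0, 0)"
proof -
  have "right_pre_reduced E" using assms(1) unfolding inductive_Edemigroup_def by blast
  moreover have "ind_dot d E 0 f \<in> E"
    using ind_dot_ok[OF assms(1)] assms(3) unfolding dot_ok_def by blast
  ultimately show ?thesis using assms(2) by (simp add: rest_mult_def meet_zero_left)
qed

lemma rest_mult_d_zero_eq_d_one: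
  fixes E :: "'a::{monoid_mult, mult_zero} set"
  assumes "inductive_Edemigroup d_zero E" and "inductive_Edemigroup d_one E"
    and "\<forall>e\<in>E. e * e = e" and "s \<noteq> 0" and "f \<in> E"
  shows "rest_mult d_zero E (e, s) (f, t) = rest_mult d_one E (e, s) (f, t)"
proof -
  have "right_pre_reduced E" using assms(2) unfolding inductive_Edemigroup_def by blast
  moreover have "d_zero s = d_one s" using assms(4) by (simp add: d_zero_def d_one_def)
  ultimately have "ind_dot d_zero E s f = ind_dot d_one E s f"
    using dot_ok_unique assms(3,5) ind_dot_ok[OF assms(1)] ind_dot_ok[OF assms(2)] by blast
  then show ?thesis by (simp add: rest_mult_def)
qed

lemma rest_mult_d_one_mem_C_d_zero:
  fixes E :: "'a::{monoid_mult, mult_zero} set"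
  assumes integ: "\<forall>s t::'a. s * t = 0 \<longrightarrow> s = 0 \<or> t = 0"
    and idem: "\<forall>e\<in>E. e * e = e" and "0 \<in> E"
    and ind: "inductive_Edemigroup d_one E"
    and x: "(e, s) \<in> C_d d_zero E" and y: "(f, t) \<in> C_d d_zero E"
  shows "rest_mult d_one E (e, s) (f, t) \<in> C_d d_zero E"
proof (cases "s = 0")
  case True
  with x have "e = 0" by (simp add: mem_C_d_d_zero_iff)
  with True y \<open>0 \<in> E\<close> show ?thesis
    by (simp add: rest_mult_zero_left[OF ind] mem_C_d_d_zero_iff)
next
  case False
  let ?u = "ind_dot d_one E s f"
  define g where "g = meet E e ?u"
  have ok: "dot_ok d_one E (ind_dot d_one E)" using ind_dot_ok[OF ind] .
  have "e \<in> E" and "f \<in> E" and f_iff: "f = 0 \<longleftrightarrow> t = 0"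
    using x y by (simp_all add: mem_C_d_d_zero_iff)
  moreover have "?u \<in> E" using ok \<open>f \<in> E\<close> unfolding dot_ok_def by blast
  ultimately have "is_meet E e ?u g"
    using ind unfolding g_def inductive_Edemigroup_def by (blast intro: is_meet_meet)
  then have "g \<in> E" and "g * ?u = g" unfolding is_meet_def le_r_def by auto
  then have gsf: "g * s * f = g * s"
    using ok \<open>f \<in> E\<close> unfolding dot_ok_def d_one_def by auto
  have "g * s * t \<noteq> 0" if "g \<noteq> 0"
  proof -
    have "g * s \<noteq> 0" using integ that False by blast
    with gsf have "t \<noteq> 0" using f_iff by auto
    with integ \<open>g * s \<noteq> 0\<close> show ?thesis by blast
  qed
  moreover have "g * (g * s * t) = g * s * t"
    using idem \<open>g \<in> E\<close> by (simp add: mult.assoc[symmetric])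
  ultimately show ?thesis
    using \<open>g \<in> E\<close> by (auto simp: rest_mult_def Let_def g_def[symmetric] mem_C_d_d_zero_iff)
qed

theorem proposition3p12:
  fixes E :: "'a::{monoid_mult, mult_zero} set"
  assumes integ: "\<forall>s t::'a. s * t = 0 \<longrightarrow> s = 0 \<or> t = 0"
    and E_idem: "\<forall>e\<in>E. e * e = e"
    and zero_in: "0 \<in> E" and one_in: "1 \<in> E"
  shows "(inductive_Edemigroup d_one E \<longleftrightarrow> inductive_Edemigroup d_zero E)
    \<and> (inductive_Edemigroup d_one E \<longrightarrow>
        (\<forall>x\<in>C_d d_zero E. \<forall>y\<in>C_d d_zero E.
           rest_mult d_one E x y \<in> C_d d_zero E \<and> rest_mult d_zero E x y = rest_mult d_one E x y))"
proof (intro conjI impI ballI)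
  show iff: "inductive_Edemigroup d_one E \<longleftrightarrow> inductive_Edemigroup d_zero E"
    using inductive_Edemigroup_d_one_iff_d_zero[OF assms] .
  fix x y
  assume ind: "inductive_Edemigroup d_one E"
    and x: "x \<in> C_d d_zero E" and y: "y \<in> C_d d_zero E"
  obtain e s f t where xy: "x = (e, s)" "y = (f, t)" by fastforce
  show "rest_mult d_one E x y \<in> C_d d_zero E"
    using rest_mult_d_one_mem_C_d_zero[OF integ E_idem zero_in ind] x y xy by simp
  have ind0: "inductive_Edemigroup d_zero E" using ind iff by blast
  have "f \<in> E" and "s = 0 \<longleftrightarrow> e = 0"
    using x y xy by (auto simp: mem_C_d_d_zero_iff)
  then show "rest_mult d_zero E x y = rest_mult d_one E x y"
    using xy rest_mult_zero_left[OF ind0 zero_in] rest_mult_zero_left[OF ind zero_in]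
      rest_mult_d_zero_eq_d_one[OF ind0 ind E_idem]
    by (cases "s = 0") simp_all
qed

end
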